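(* In the setting of the flag $\mathcal{F}=(\mathcal{F}_1,\dots,\mathcal{F}_r)$, $r\ge 2$, with $\mathcal{F}_i=\bigoplus_{j=0}^{s_i-1}\mathbb{F}_{q^m}\alpha^{lj}$ and $1\le s_1<\dots<s_r\le L$, assume $L<s=n/m$. Then every subspace of $\mathcal{F}$ is a subfield of $\mathbb{F}_{q^n}$ (i.e. $\mathcal{F}$ is a Galois flag and $\mathrm{Orb}(\mathcal{F})$ is a Galois flag code) if and only if the type of $\mathcal{F}$ is $(m,mL)$, i.e. $r=2$, $s_1=1$, $s_2=L$.
   Context: $q$ prime power; $m$ divides $n$; $\alpha$ is a primitive element of $\mathbb{F}_{q^n}$; $l$ is an integer with $1\le l<\frac{q^n-1}{q^m-1}$; $L$ is the degree of the minimal polynomial of $\alpha^l$ over $\mathbb{F}_{q^m}$ (so $L\mid n/m$). Subspaces are $\mathbb{F}_q$-subspaces of $\mathbb{F}_{q^n}$; a flag is a chain $\{0\}\subsetneq\mathcal{F}_1\subsetneq\cdots\subsetneq\mathcal{F}_r\subsetneq\mathbb{F}_{q^n}$, its type being the vector of dimensions (here $(ms_1,\dots,ms_r)$). A Galois flag is a flag all of whose subspaces are subfields of $\mathbb{F}_{q^n}$, and a Galois flag code is the orbit $\mathrm{Orb}_\beta$ of a Galois flag under multiplication by powers of some $\beta\in\mathbb{F}_{q^n}^\ast$. *)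

theory Defs
  imports "HOL-Computational_Algebra.Primes"
begin

definition is_subfield :: "'a::field set \<Rightarrow> bool" where
  "is_subfield S \<longleftrightarrow> 0 \<in> S \<and> 1 \<in> S \<and>
     (\<forall>x\<in>S. \<forall>y\<in>S. x + y \<in> S \<and> x * y \<in> S) \<and>
     (\<forall>x\<in>S. - x \<in> S) \<and> (\<forall>x\<in>S. x \<noteq> 0 \<longrightarrow> inverse x \<in> S)"

definition primitive_element :: "'a::field \<Rightarrow> bool" where
  "primitive_element a \<longleftrightarrow> a \<noteq> 0 \<and> (\<forall>x. x \<noteq> 0 \<longrightarrow> (\<exists>k::nat. a ^ k = x))"

definition minpoly_degree :: "'a::field set \<Rightarrow> 'a \<Rightarrow> nat" where
  "minpoly_degree K b = (LEAST k. k \<ge> 1 \<and> (\<exists>c::nat \<Rightarrow> 'a. (\<forall>i<k. c i \<in> K) \<and>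
        b ^ k + (\<Sum>i<k. c i * b ^ i) = 0))"

definition power_span :: "'a::field set \<Rightarrow> 'a \<Rightarrow> nat \<Rightarrow> 'a set" where
  "power_span K b s = {x. \<exists>c::nat \<Rightarrow> 'a. (\<forall>j<s. c j \<in> K) \<and> x = (\<Sum>j<s. c j * b ^ j)}"

end

theory Submission
  imports Defs
begin

text \<open>Write \<open>b = \<alpha>^l\<close>, \<open>K\<close> for the subfield of order \<open>q^m\<close> and \<open>S\<^sub>t\<close> for the \<open>K\<close>-span
  of \<open>1, b, \<dots>, b^(t-1)\<close>. \<open>S\<^sub>1 = K\<close>, and \<open>S\<^sub>L\<close> is a field: the minimal polynomial puts \<open>b^L\<close>
  into \<open>S\<^sub>L\<close>, so \<open>S\<^sub>L\<close> is closed under multiplication, and a finite subring of a field is a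
  subfield. For \<open>2 \<le> t < L\<close> a field \<open>S\<^sub>t\<close> would contain \<open>b\<close>, hence \<open>b^t\<close>, giving a monic
  relation of degree \<open>t < L\<close>. So a strictly increasing flag with dimensions in \<open>[1, L]\<close>
  consists of subfields exactly when it is \<open>S\<^sub>1 \<subset> S\<^sub>L\<close>.\<close>

lemma is_subfieldD:
  assumes "is_subfield K"
  shows subfield_zero: "0 \<in> K" and subfield_one: "1 \<in> K"
    and subfield_add: "x \<in> K \<Longrightarrow> y \<in> K \<Longrightarrow> x + y \<in> K"
    and subfield_mult: "x \<in> K \<Longrightarrow> y \<in> K \<Longrightarrow> x * y \<in> K"
    and subfield_uminus: "x \<in> K \<Longrightarrow> - x \<in> K"
  using assms unfolding is_subfield_def by blast+

lemma finite_subring_is_subfield: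
  fixes S :: "'a::field set"
  assumes "finite S" "0 \<in> S" "1 \<in> S"
    and add: "\<And>x y. x \<in> S \<Longrightarrow> y \<in> S \<Longrightarrow> x + y \<in> S"
    and mult: "\<And>x y. x \<in> S \<Longrightarrow> y \<in> S \<Longrightarrow> x * y \<in> S"
    and uminus: "\<And>x. x \<in> S \<Longrightarrow> - x \<in> S"
  shows "is_subfield S"
proof -
  have "inverse x \<in> S" if x: "x \<in> S" "x \<noteq> 0" for x
  proof -
    have "(*) x ` S = S"
      using assms(1) x mult by (intro endo_inj_surj) (auto simp: inj_on_def)
    then obtain y where "y \<in> S" "x * y = 1"
      using \<open>1 \<in> S\<close> by (metis imageE)
    then show ?thesis
      using inverse_unique by metis
  qed
  with assms show ?thesis
    unfolding is_subfield_def by blast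
qed

lemma power_spanI:
  "\<forall>j<s. c j \<in> K \<Longrightarrow> (\<Sum>j<s. c j * b ^ j) \<in> power_span K b s"
  unfolding power_span_def by blast

lemma power_span_one:
  "power_span K b 1 = K"
  unfolding power_span_def by auto

context
  fixes K :: "'a::field set"
  assumes K: "is_subfield K"
begin

lemma power_span_zero: "0 \<in> power_span K b s"
  using power_spanI[of s "\<lambda>_. 0" K b] subfield_zero[OF K] by simp

lemma power_span_add:
  assumes "x \<in> power_span K b s" "y \<in> power_span K b s"
  shows "x + y \<in> power_span K b s"
proof -
  obtain c d where "\<forall>j<s. c j \<in> K" "x = (\<Sum>j<s. c j * b ^ j)"
    and "\<forall>j<s. d j \<in> K" "y = (\<Sum>j<s. d j * b ^ j)"
    using assms unfolding power_span_def by blast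
  then show ?thesis
    using power_spanI[of s "\<lambda>j. c j + d j" K b] subfield_add[OF K]
    by (simp add: sum.distrib distrib_right)
qed

lemma power_span_scale:
  assumes "a \<in> K" "x \<in> power_span K b s"
  shows "a * x \<in> power_span K b s"
proof -
  obtain c where "\<forall>j<s. c j \<in> K" "x = (\<Sum>j<s. c j * b ^ j)"
    using assms(2) unfolding power_span_def by blast
  then show ?thesis
    using power_spanI[of s "\<lambda>j. a * c j" K b] subfield_mult[OF K] assms(1)
    by (simp add: sum_distrib_left mult.assoc)
qed

lemma power_span_uminus:
  "x \<in> power_span K b s \<Longrightarrow> - x \<in> power_span K b s"
  using power_span_scale[of "- 1"] subfield_uminus[OF K] subfield_one[OF K] by fastforce

lemma power_span_sum:
  "finite A \<Longrightarrow> (\<And>a. a \<in> A \<Longrightarrow> f a \<in> power_span K b s) \<Longrightarrow> sum f A \<in> power_span K b s"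
  by (induction A rule: finite_induct) (auto intro: power_span_zero power_span_add)

lemma power_in_power_span:
  assumes "j < s"
  shows "b ^ j \<in> power_span K b s"
proof -
  have "(\<Sum>i<s. (if i = j then 1 else 0) * b ^ i) = (\<Sum>i<s. if i = j then b ^ i else 0)"
    by (intro sum.cong) auto
  also have "\<dots> = b ^ j"
    using assms by simp
  finally have "(\<Sum>i<s. (if i = j then 1 else 0) * b ^ i) = b ^ j" .
  then show ?thesis
    using power_spanI[of s "\<lambda>i. if i = j then 1 else 0" K b]
      subfield_zero[OF K] subfield_one[OF K] by simp
qed

lemma power_span_mult_closed:
  assumes top: "b ^ s \<in> power_span K b s"
    and x: "x \<in> power_span K b s" and y: "y \<in> power_span K b s"
  shows "x * y \<in> power_span K b s"
proof -
  let ?S = "power_span K b s"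
  have times_b: "b * z \<in> ?S" if z: "z \<in> ?S" for z
  proof -
    obtain c where c: "\<forall>j<s. c j \<in> K" "z = (\<Sum>j<s. c j * b ^ j)"
      using z unfolding power_span_def by blast
    have "b ^ Suc j \<in> ?S" if "j < s" for j
      using that top power_in_power_span[of "Suc j" s b] by (cases "Suc j = s") auto
    then have "(\<Sum>j<s. c j * b ^ Suc j) \<in> ?S"
      using c(1) by (intro power_span_sum power_span_scale) auto
    then show ?thesis
      using c(2) by (simp add: sum_distrib_left algebra_simps)
  qed
  have powers_times: "b ^ j * y \<in> ?S" for j
    by (induction j) (simp_all add: y times_b mult.assoc)
  obtain c where c: "\<forall>j<s. c j \<in> K" "x = (\<Sum>j<s. c j * b ^ j)"
    using x unfolding power_span_def by blast
  have "(\<Sum>j<s. c j * (b ^ j * y)) \<in> ?S"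
    using c(1) powers_times by (intro power_span_sum power_span_scale[of "c _"]) auto
  then show ?thesis
    using c(2) by (simp add: sum_distrib_right mult.assoc)
qed

end

lemma power_eq_power_lt:
  fixes b :: "'a::{monoid_mult,finite}"
  obtains i j where "i < j" "b ^ i = b ^ j"
proof -
  have "\<not> inj (\<lambda>i::nat. b ^ i)"
    using finite_UNIV infinite_UNIV_nat inj_on_finite by blast
  then obtain i j where "i \<noteq> j" "b ^ i = b ^ j"
    unfolding inj_def by blast
  then show ?thesis
    using that by (metis linorder_neqE_nat)
qed

lemma minpoly_degree_root:
  fixes b :: "'a::{field,finite}"
  assumes K: "is_subfield K"
  obtains c where "minpoly_degree K b \<ge> 1" "\<forall>i<minpoly_degree K b. c i \<in> K"
    "b ^ minpoly_degree K b + (\<Sum>i<minpoly_degree K b. c i * b ^ i) = 0"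
proof -
  obtain i j where ij: "i < j" "b ^ i = b ^ j"
    using power_eq_power_lt .
  \<comment> \<open>\<open>X^j - X^i\<close> shows that the set of degrees in the definition is nonempty\<close>
  define c :: "nat \<Rightarrow> 'a" where "c t = (if t = i then - 1 else 0)" for t
  have "(\<Sum>t<j. c t * b ^ t) = (\<Sum>t<j. if t = i then - (b ^ t) else 0)"
    unfolding c_def by (intro sum.cong) auto
  then have "b ^ j + (\<Sum>t<j. c t * b ^ t) = 0"
    using ij by simp
  moreover have "\<forall>t<j. c t \<in> K"
    using subfield_zero[OF K] subfield_uminus[OF K subfield_one[OF K]] by (simp add: c_def)
  ultimately have "\<exists>k. k \<ge> 1 \<and> (\<exists>c. (\<forall>i<k. c i \<in> K) \<and> b ^ k + (\<Sum>i<k. c i * b ^ i) = 0)"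
    using ij(1) by (intro exI[of _ j]) auto
  from LeastI_ex[OF this] show ?thesis
    using that unfolding minpoly_degree_def by blast
qed

lemma minpoly_degree_le:
  "k \<ge> 1 \<Longrightarrow> \<forall>i<k. c i \<in> K \<Longrightarrow> b ^ k + (\<Sum>i<k. c i * b ^ i) = 0 \<Longrightarrow> minpoly_degree K b \<le> k"
  unfolding minpoly_degree_def by (rule Least_le) blast

lemma power_span_minpoly_degree_is_subfield:
  fixes b :: "'a::{field,finite}"
  assumes K: "is_subfield K"
  shows "is_subfield (power_span K b (minpoly_degree K b))"
proof -
  let ?L = "minpoly_degree K b"
  let ?S = "power_span K b ?L"
  obtain c where L: "?L \<ge> 1" and c: "\<forall>i<?L. c i \<in> K" "b ^ ?L + (\<Sum>i<?L. c i * b ^ i) = 0"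
    using minpoly_degree_root[OF K] .
  have "- (\<Sum>i<?L. c i * b ^ i) \<in> ?S"
    using c(1) by (intro power_span_uminus[OF K] power_spanI)
  moreover have "b ^ ?L = - (\<Sum>i<?L. c i * b ^ i)"
    using c(2) by (simp add: eq_neg_iff_add_eq_0)
  ultimately have top: "b ^ ?L \<in> ?S"
    by simp
  show ?thesis
    using K L power_span_zero power_in_power_span[OF K, of 0 ?L b] power_span_add
      power_span_mult_closed[OF K top] power_span_uminus
    by (intro finite_subring_is_subfield) auto
qed

lemma power_span_not_subfield:
  assumes K: "is_subfield K" and s: "2 \<le> s" "s < minpoly_degree K b"
  shows "\<not> is_subfield (power_span K b s)"
proof
  let ?S = "power_span K b s"
  assume S: "is_subfield ?S"
  have "b \<in> ?S"
    using power_in_power_span[OF K, of 1 s b] s by simp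
  then have "b ^ j \<in> ?S" for j
    by (induction j) (simp_all add: subfield_one[OF S] subfield_mult[OF S])
  then obtain c where c: "\<forall>j<s. c j \<in> K" "b ^ s = (\<Sum>j<s. c j * b ^ j)"
    unfolding power_span_def by blast
  have "minpoly_degree K b \<le> s"
    using s c subfield_uminus[OF K]
    by (intro minpoly_degree_le[of s "\<lambda>j. - c j"]) (simp_all add: sum_negf)
  with s show False by simp
qed

lemma lift_Suc_mono_less_interval:
  fixes f :: "nat \<Rightarrow> 'b::order"
  assumes succ: "\<And>n. a \<le> n \<Longrightarrow> n < b \<Longrightarrow> f n < f (Suc n)"
    and "a \<le> i" "i < j" "j \<le> b"
  shows "f i < f j"
proof -
  have "f i < f j'" if "Suc i \<le> j'" "j' \<le> b" for j'
    using that(1,2)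
  proof (induction j' rule: dec_induct)
    case base
    then show ?case using succ \<open>a \<le> i\<close> by simp
  next
    case (step n)
    then show ?case using succ[of n] \<open>a \<le> i\<close> by force
  qed
  with assms(3-) show ?thesis by simp
qed

theorem mainTheorem6:
  fixes \<alpha> :: "'a::{field,finite}"
    and Fqm :: "'a set"
    and p k q n m l r L :: nat
    and s :: "nat \<Rightarrow> nat"
  assumes "prime p" and "k \<ge> 1" and "q = p ^ k"
    and "m \<ge> 1" and "m dvd n"
    and "card (UNIV :: 'a set) = q ^ n"
    and "is_subfield Fqm" and "card Fqm = q ^ m"
    and "primitive_element \<alpha>"
    and "1 \<le> l" and "l < (q ^ n - 1) div (q ^ m - 1)"
    and "L = minpoly_degree Fqm (\<alpha> ^ l)"
    and "r \<ge> 2"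
    and "1 \<le> s 1"
    and "\<And>i. 1 \<le> i \<Longrightarrow> i < r \<Longrightarrow> s i < s (Suc i)"
    and "s r \<le> L"
    and "L < n div m"
  shows "(\<forall>i\<in>{1..r}. is_subfield (power_span Fqm (\<alpha> ^ l) (s i)))
           \<longleftrightarrow> (r = 2 \<and> s 1 = 1 \<and> s 2 = L)"
proof
  have mono: "s i < s j" if "1 \<le> i" "i < j" "j \<le> r" for i j
    using lift_Suc_mono_less_interval[of 1 r s i j] assms(15) that by blast
  have range: "1 \<le> s i \<and> s i \<le> L" if "i \<in> {1..r}" for i
    using that mono[of 1 i] mono[of i r] assms(14,16) by (cases "i = 1"; cases "i = r") auto
  assume flag: "\<forall>i\<in>{1..r}. is_subfield (power_span Fqm (\<alpha> ^ l) (s i))"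
  have ends: "s i = 1 \<or> s i = L" if "i \<in> {1..r}" for i
    using range[OF that] flag that power_span_not_subfield[OF assms(7), of "s i" "\<alpha> ^ l"] assms(12)
    by fastforce
  have "s 1 = 1" "s 2 = L"
    using ends[of 1] ends[of 2] range[of 1] range[of 2] mono[of 1 2] assms(13) by auto
  moreover have "r = 2"
    using mono[of 2 3] range[of 3] assms(13) \<open>s 2 = L\<close> by (cases "r = 2") auto
  ultimately show "r = 2 \<and> s 1 = 1 \<and> s 2 = L" by simp
next
  assume "r = 2 \<and> s 1 = 1 \<and> s 2 = L"
  moreover have "{1..2::nat} = {1, 2}" by auto
  ultimately show "\<forall>i\<in>{1..r}. is_subfield (power_span Fqm (\<alpha> ^ l) (s i))"
    using power_span_one[of Fqm "\<alpha> ^ l"] assms(7,12)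
      power_span_minpoly_degree_is_subfield[OF assms(7), of "\<alpha> ^ l"] by auto
qed

end
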